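(* For all $\alpha\in(0,1]$ and $D>0$ there exists $M(\alpha,D)>0$ such that, with $n_0:=4K(d+1)/\alpha$: for all $n\ge n_0$, all $\theta\in\Theta$, all $x\in[K^\theta]$ and all $x^*\in[K^*]$, if $|I_{n,D}(x,x^*,\theta)|\ge n\alpha/K$ then $\sup_{t\in[0,n]}|T^*_{x^*}(t)-T^\theta_x(t)|\le M(\alpha,D)$.
   Context: Fix integers $K\ge1$, $d\ge1$, $\sigma_-\in(0,1)$; $[K']=\{1,\dots,K'\}$; $\Delta_{K'}$ = probability vectors on $[K']$; $\Sigma^{\sigma_-}_{K'}$ = $K'\times K'$ stochastic matrices with all entries $\ge\sigma_-$; $\mathbb R_d[X]$ = real polynomials of degree $\le d$ on $\mathbb R_+$; $\Gamma$ a set of probability densities on $\mathbb R$. $\Theta=\bigcup_{K'=1}^K\{[K']\}\times\Delta_{K'}\times\Sigma^{\sigma_-}_{K'}\times\Gamma^{K'}\times(\mathbb R_d[X])^{K'}$, elements $\theta=(K^\theta,\pi^\theta,Q^\theta,\gamma^\theta,T^\theta)$ with trends $T^\theta_x\in\mathbb R_d[X]$; $\theta^*=(K^*,\pi^*,Q^*,\gamma^*,T^* )\in\Theta$ is a fixed (true) parameter. For $n\in\mathbb N^*$, $D>0$: $I_{n,D}(x,x^*,\theta)=\{t\in\{1,\dots,n\}:|T^*_{x^*}(t)-T^\theta_x(t)|\le D\}$. *)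

theory Defs
  imports "HOL-Analysis.Analysis" "HOL-Computational_Algebra.Polynomial"
begin

text \<open>A parameter theta = (K, pi, Q, gamma, T): number of states, initial law,
  transition matrix, emission densities and polynomial trends (states indexed by 1..K).\<close>
record param =
  pK :: nat
  ppi :: "nat \<Rightarrow> real"
  pQ :: "nat \<Rightarrow> nat \<Rightarrow> real"
  pgamma :: "nat \<Rightarrow> real \<Rightarrow> real"
  pT :: "nat \<Rightarrow> real poly"

definition prob_vec :: "nat \<Rightarrow> (nat \<Rightarrow> real) \<Rightarrow> bool" where
  "prob_vec K' p \<longleftrightarrow> (\<forall>i\<in>{1..K'}. p i \<ge> 0) \<and> (\<Sum>i=1..K'. p i) = 1"

definition stoch_mat_lb :: "real \<Rightarrow> nat \<Rightarrow> (nat \<Rightarrow> nat \<Rightarrow> real) \<Rightarrow> bool" where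
  "stoch_mat_lb s K' Q \<longleftrightarrow>
     (\<forall>i\<in>{1..K'}. \<forall>j\<in>{1..K'}. Q i j \<ge> s) \<and> (\<forall>i\<in>{1..K'}. (\<Sum>j=1..K'. Q i j) = 1)"

definition in_Theta :: "nat \<Rightarrow> nat \<Rightarrow> real \<Rightarrow> (real \<Rightarrow> real) set \<Rightarrow> param \<Rightarrow> bool" where
  "in_Theta K d s \<Gamma> \<theta> \<longleftrightarrow>
     1 \<le> pK \<theta> \<and> pK \<theta> \<le> K \<and>
     prob_vec (pK \<theta>) (ppi \<theta>) \<and>
     stoch_mat_lb s (pK \<theta>) (pQ \<theta>) \<and>
     (\<forall>x\<in>{1..pK \<theta>}. pgamma \<theta> x \<in> \<Gamma>) \<and>
     (\<forall>x\<in>{1..pK \<theta>}. degree (pT \<theta> x) \<le> d)"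

definition I_set :: "param \<Rightarrow> nat \<Rightarrow> real \<Rightarrow> nat \<Rightarrow> nat \<Rightarrow> param \<Rightarrow> nat set" where
  "I_set \<theta>s n D x xs \<theta> =
     {t\<in>{1..n}. \<bar>poly (pT \<theta>s xs) (real t) - poly (pT \<theta> x) (real t)\<bar> \<le> D}"

end

theory Submission imports Defs begin

text \<open>
  The difference of the two trends is a polynomial p of degree at most d with |p| \<le> D
  on a set S \<subseteq> {1..n} of at least n\<alpha>/K \<ge> 2d integers. Taking every g-th element of S,
  with g about |S|/d, gives d + 1 nodes in [0, n] that are pairwise at least g \<ge> |S|/(2d)
  apart. In the Lagrange interpolation formula for p at these nodes, every factor
  (y - t_j)/(t_i - t_j) with y \<in> [0, n] is at most n/g \<le> 2Kd/\<alpha>, so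
  |p| \<le> (d + 1) D (2Kd/\<alpha>)^d on [0, n], uniformly in n and \<theta>.
\<close>

lemma poly_eq_lagrange_interpolation:
  fixes p :: "'a::field poly" and t :: "nat \<Rightarrow> 'a"
  assumes deg: "degree p \<le> d" and inj: "inj_on t {..d}"
  shows "poly p x = (\<Sum>i\<le>d. poly p (t i) * (\<Prod>j\<in>{..d}-{i}. (x - t j) / (t i - t j)))"
proof -
  define L where "L = (\<Sum>i\<le>d. smult (poly p (t i) / (\<Prod>j\<in>{..d}-{i}. (t i - t j)))
                                (\<Prod>j\<in>{..d}-{i}. [:- t j, 1:]))"
  have degree_L: "degree L \<le> d"
    unfolding L_def
  proof (rule degree_sum_le)
    fix i assume i: "i \<in> {..d}"
    have "degree (\<Prod>j\<in>{..d}-{i}. [:- t j, 1:]) \<le> sum (degree \<circ> (\<lambda>j. [:- t j, 1:])) ({..d}-{i})"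
      by (rule degree_prod_sum_le) simp
    also have "\<dots> = d" using i by simp
    finally show "degree (smult (poly p (t i) / (\<Prod>j\<in>{..d}-{i}. (t i - t j)))
                                (\<Prod>j\<in>{..d}-{i}. [:- t j, 1:])) \<le> d"
      by (meson degree_smult_le order_trans)
  qed simp
  have poly_L: "poly L y = (\<Sum>i\<le>d. poly p (t i) * (\<Prod>j\<in>{..d}-{i}. (y - t j) / (t i - t j)))" for y
    unfolding L_def poly_sum poly_smult poly_prod
    by (intro sum.cong refl) (simp add: prod_dividef)
  have L_interpolates: "poly p y = poly L y" if node: "y \<in> t ` {..d}" for y
  proof -
    obtain k where k: "k \<le> d" "y = t k" using node by auto
    have "poly L y = (\<Sum>i\<le>d. if i = k then poly p (t k) else 0)"
      unfolding poly_L
    proof (rule sum.cong)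
      fix i assume i: "i \<in> {..d}"
      have "(\<Prod>j\<in>{..d}-{k}. (y - t j) / (t k - t j)) = 1"
        using inj k by (intro prod.neutral) (auto simp: inj_on_def)
      moreover have "(\<Prod>j\<in>{..d}-{i}. (y - t j) / (t i - t j)) = 0" if "i \<noteq> k"
        using that k by (intro prod_zero) auto
      ultimately show "poly p (t i) * (\<Prod>j\<in>{..d}-{i}. (y - t j) / (t i - t j))
                       = (if i = k then poly p (t k) else 0)"
        by auto
    qed simp
    also have "\<dots> = poly p y" using k by simp
    finally show ?thesis by simp
  qed
  have "card (t ` {..d}) = Suc d" using inj by (simp add: card_image)
  then have "p = L"
    using deg degree_L by (intro poly_eqI_degree[OF L_interpolates]) auto
  then show ?thesis unfolding poly_L[of x, symmetric] by simp
qed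

lemma poly_abs_le_of_separated_nodes:
  fixes p :: "real poly" and t :: "nat \<Rightarrow> real"
  assumes deg: "degree p \<le> d" and g: "0 < g"
    and sep: "\<And>i j. i \<le> d \<Longrightarrow> j \<le> d \<Longrightarrow> i \<noteq> j \<Longrightarrow> g \<le> \<bar>t i - t j\<bar>"
    and nodes: "\<And>i. i \<le> d \<Longrightarrow> t i \<in> {0..N}"
    and bounded: "\<And>i. i \<le> d \<Longrightarrow> \<bar>poly p (t i)\<bar> \<le> D"
    and y: "y \<in> {0..N}"
  shows "\<bar>poly p y\<bar> \<le> real (Suc d) * D * (N / g) ^ d"
proof -
  have inj: "inj_on t {..d}"
  proof (rule inj_onI, rule ccontr)
    fix i j assume "i \<in> {..d}" "j \<in> {..d}" "t i = t j" "i \<noteq> j"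
    then show False using sep[of i j] g by simp
  qed
  have term_bound: "\<bar>poly p (t i) * (\<Prod>j\<in>{..d}-{i}. (y - t j) / (t i - t j))\<bar> \<le> D * (N / g) ^ d"
    if i: "i \<le> d" for i
  proof -
    have "\<bar>\<Prod>j\<in>{..d}-{i}. (y - t j) / (t i - t j)\<bar> = (\<Prod>j\<in>{..d}-{i}. \<bar>y - t j\<bar> / \<bar>t i - t j\<bar>)"
      by (simp add: abs_prod)
    also have "\<dots> \<le> (\<Prod>j\<in>{..d}-{i}. N / g)"
    proof (rule prod_mono, rule conjI)
      fix j assume j: "j \<in> {..d}-{i}"
      have "\<bar>y - t j\<bar> \<le> N" using nodes[of j] j y by auto
      moreover have "g \<le> \<bar>t i - t j\<bar>" using sep[of i j] i j by simp
      ultimately show "\<bar>y - t j\<bar> / \<bar>t i - t j\<bar> \<le> N / g"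
        using g by (intro frac_le) auto
    qed simp
    also have "\<dots> = (N / g) ^ d" using i by simp
    finally show ?thesis
      unfolding abs_mult using bounded[OF i] by (intro mult_mono) auto
  qed
  have "\<bar>poly p y\<bar> \<le> (\<Sum>i\<le>d. \<bar>poly p (t i) * (\<Prod>j\<in>{..d}-{i}. (y - t j) / (t i - t j))\<bar>)"
    unfolding poly_eq_lagrange_interpolation[OF deg inj, of y] by (rule sum_abs)
  also have "\<dots> \<le> (\<Sum>i\<le>d. D * (N / g) ^ d)"
    using term_bound by (intro sum_mono) simp
  also have "\<dots> = real (Suc d) * D * (N / g) ^ d" by simp
  finally show ?thesis .
qed

lemma sorted_wrt_less_nth_add_le:
  assumes "sorted_wrt (<) (l :: nat list)" and "i + k < length l"
  shows "l ! i + k \<le> l ! (i + k)"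
  using assms(2)
proof (induction k)
  case (Suc k)
  then have "l ! i + k \<le> l ! (i + k)" by simp
  moreover have "l ! (i + k) < l ! (i + Suc k)"
    using sorted_wrt_nth_less[OF assms(1)] Suc.prems by simp
  ultimately show ?case by simp
qed simp

lemma finite_nat_set_obtain_spread_points:
  fixes S :: "nat set"
  assumes "finite S" and "d * g < card S"
  obtains t where "\<And>i. i \<le> d \<Longrightarrow> t i \<in> S"
    and "\<And>i j. i < j \<Longrightarrow> j \<le> d \<Longrightarrow> t i + g \<le> t j"
proof
  define l where "l = sorted_list_of_set S"
  have l: "sorted_wrt (<) l" "length l = card S" "set l = S"
    using assms(1) unfolding l_def by simp_all
  have idx: "i * g < length l" if "i \<le> d" for i
  proof -
    have "i * g \<le> d * g" using that by simp
    then show ?thesis using assms(2) l(2) by linarith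
  qed
  show "l ! (i * g) \<in> S" if "i \<le> d" for i
    using idx[OF that] l(3) nth_mem by blast
  show "l ! (i * g) + g \<le> l ! (j * g)" if "i < j" "j \<le> d" for i j
  proof -
    have eq: "j * g = i * g + (j - i) * g"
      using that by (simp add: add_mult_distrib[symmetric])
    have "l ! (i * g) + (j - i) * g \<le> l ! (i * g + (j - i) * g)"
      using idx[OF that(2)] eq by (intro sorted_wrt_less_nth_add_le[OF l(1)]) simp
    then have "l ! (i * g) + (j - i) * g \<le> l ! (j * g)" by (simp only: eq)
    moreover have "1 \<le> j - i" using that by simp
    then have "g \<le> (j - i) * g" by simp
    ultimately show ?thesis by linarith
  qed
qed

text \<open>g = (m - 1) div d works; it loses at most a factor 2 against m/d because m \<ge> 2d.\<close>
lemma obtain_spacing: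
  fixes m d :: nat
  assumes "1 \<le> d" and "2 * d \<le> m"
  obtains g where "0 < g" and "d * g < m" and "m \<le> 2 * d * g"
proof
  define g where "g = (m - 1) div d"
  have "m - 1 = d * g + (m - 1) mod d" unfolding g_def by simp
  moreover have "(m - 1) mod d < d" using assms(1) by simp
  ultimately have "m - d \<le> d * g" "d * g \<le> m - 1" by linarith+
  then show "d * g < m" and g: "m \<le> 2 * d * g" using assms by linarith+
  show "0 < g" using g assms by (cases g) auto
qed

lemma poly_abs_le_of_dense_bounded_set:
  fixes p :: "real poly" and S :: "nat set"
  assumes deg: "degree p \<le> d" and d: "1 \<le> d"
    and S: "S \<subseteq> {0..n}" and card: "2 * d \<le> card S"
    and bounded: "\<And>t. t \<in> S \<Longrightarrow> \<bar>poly p (real t)\<bar> \<le> D"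
    and y: "y \<in> {0..real n}"
  shows "\<bar>poly p y\<bar> \<le> real (Suc d) * D * (2 * real d * real n / real (card S)) ^ d"
proof -
  obtain g where g_pos: "0 < g" and spread_fits: "d * g < card S" and "card S \<le> 2 * d * g"
    using obtain_spacing[OF d card] .
  have "finite S" using S finite_subset by blast
  then obtain t where t: "\<And>i. i \<le> d \<Longrightarrow> t i \<in> S"
    and spread: "\<And>i j. i < j \<Longrightarrow> j \<le> d \<Longrightarrow> t i + g \<le> t j"
    using finite_nat_set_obtain_spread_points spread_fits by blast
  have sep: "real g \<le> \<bar>real (t i) - real (t j)\<bar>"
    if "i \<le> d" "j \<le> d" "i \<noteq> j" for i j
    using spread[of i j] spread[of j i] that by (cases "i < j") auto
  have nodes: "t i \<le> n" if "i \<le> d" for i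
    using t[OF that] S by auto
  have "\<bar>poly p y\<bar> \<le> real (Suc d) * D * (real n / real g) ^ d"
    using nodes t bounded y
    by (intro poly_abs_le_of_separated_nodes[OF deg _ sep]) (auto simp: g_pos)
  also have "\<dots> \<le> real (Suc d) * D * (2 * real d * real n / real (card S)) ^ d"
  proof (intro mult_left_mono power_mono)
    have "real (card S) \<le> 2 * real d * real g"
      using \<open>card S \<le> 2 * d * g\<close> by (metis of_nat_le_iff of_nat_mult of_nat_numeral)
    then have "real n * real (card S) \<le> real n * (2 * real d * real g)"
      by (rule mult_left_mono) simp
    moreover have "0 < card S" using spread_fits by simp
    ultimately show "real n / real g \<le> 2 * real d * real n / real (card S)"
      using g_pos by (simp add: field_simps mult.commute mult.left_commute)
    have "0 \<le> D" using bounded t[of 0] by (meson abs_ge_zero order_trans zero_le)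
    then show "0 \<le> real (Suc d) * D" by simp
  qed simp_all
  finally show ?thesis .
qed

lemma poly_abs_le_of_proportion_bounded:
  fixes p :: "real poly" and S :: "nat set"
  assumes deg: "degree p \<le> d" and d: "1 \<le> d" and \<rho>: "0 < \<rho>"
    and S: "S \<subseteq> {0..n}" and dense: "\<rho> * real n \<le> real (card S)"
    and large: "2 * real d \<le> \<rho> * real n"
    and bounded: "\<And>t. t \<in> S \<Longrightarrow> \<bar>poly p (real t)\<bar> \<le> D"
    and y: "y \<in> {0..real n}"
  shows "\<bar>poly p y\<bar> \<le> real (Suc d) * D * (2 * real d / \<rho>) ^ d"
proof -
  have "2 * real d \<le> real (card S)" using dense large by linarith
  then have card: "2 * d \<le> card S" by simp
  have "0 < \<rho> * real n" using large d by simp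
  then have n_pos: "0 < real n" using \<rho> by (simp add: zero_less_mult_iff)
  have "\<bar>poly p y\<bar> \<le> real (Suc d) * D * (2 * real d * real n / real (card S)) ^ d"
    by (rule poly_abs_le_of_dense_bounded_set[OF deg d S card bounded y])
  also have "\<dots> \<le> real (Suc d) * D * (2 * real d / \<rho>) ^ d"
  proof (intro mult_left_mono power_mono)
    have "2 * real d * real n / real (card S) \<le> 2 * real d * real n / (\<rho> * real n)"
      using dense n_pos \<rho> card d by (intro divide_left_mono mult_pos_pos) simp_all
    then show "2 * real d * real n / real (card S) \<le> 2 * real d / \<rho>"
      using n_pos by simp
    obtain t0 where "t0 \<in> S" using card d by fastforce
    then have "0 \<le> D" using bounded[of t0] abs_ge_zero[of "poly p (real t0)"] by linarith
    then show "0 \<le> real (Suc d) * D" by simp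
  qed simp_all
  finally show ?thesis .
qed

lemma abs_trend_difference_le:
  assumes K: "1 \<le> K" and d: "1 \<le> d" and \<alpha>: "0 < \<alpha>"
    and \<theta>s: "in_Theta K d s \<Gamma> \<theta>s" and \<theta>: "in_Theta K d s \<Gamma> \<theta>"
    and x: "x \<in> {1..pK \<theta>}" and xs: "xs \<in> {1..pK \<theta>s}"
    and n: "4 * real K * (real d + 1) / \<alpha> \<le> real n"
    and card: "real n * \<alpha> / real K \<le> real (card (I_set \<theta>s n D x xs \<theta>))"
    and y: "y \<in> {0..real n}"
  shows "\<bar>poly (pT \<theta>s xs) y - poly (pT \<theta> x) y\<bar> \<le> real (Suc d) * D * (2 * real K * real d / \<alpha>) ^ d"
proof -
  have K_pos: "0 < real K" using K by simp
  have deg: "degree (pT \<theta>s xs - pT \<theta> x) \<le> d"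
    using \<theta>s \<theta> x xs unfolding in_Theta_def by (meson degree_diff_le)
  have "4 * real d + 4 \<le> \<alpha> / real K * real n"
    using n \<alpha> K_pos by (simp add: field_simps)
  then have large: "2 * real d \<le> \<alpha> / real K * real n" by linarith
  have dense: "\<alpha> / real K * real n \<le> real (card (I_set \<theta>s n D x xs \<theta>))"
    using card by (simp add: ac_simps)
  have "\<bar>poly (pT \<theta>s xs - pT \<theta> x) y\<bar> \<le> real (Suc d) * D * (2 * real d / (\<alpha> / real K)) ^ d"
    using d \<alpha> K_pos y large dense[unfolded I_set_def]
    by (intro poly_abs_le_of_proportion_bounded[OF deg]) auto
  then show ?thesis by (simp add: ac_simps)
qed

theorem proposition10:
  fixes K d :: nat and s :: real and \<Gamma> :: "(real \<Rightarrow> real) set" and \<theta>s :: param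
  assumes "K \<ge> 1" and "d \<ge> 1" and "0 < s" and "s < 1"
    and "\<forall>g\<in>\<Gamma>. (\<forall>y. g y \<ge> 0) \<and> (g has_integral 1) UNIV"
    and "in_Theta K d s \<Gamma> \<theta>s"
  shows "\<forall>\<alpha> D. 0 < \<alpha> \<and> \<alpha> \<le> 1 \<and> 0 < D \<longrightarrow>
          (\<exists>M>0. \<forall>n::nat. real n \<ge> 4 * real K * (real d + 1) / \<alpha> \<longrightarrow>
             (\<forall>\<theta> x xs. in_Theta K d s \<Gamma> \<theta> \<and> x \<in> {1..pK \<theta>} \<and> xs \<in> {1..pK \<theta>s} \<and>
                real (card (I_set \<theta>s n D x xs \<theta>)) \<ge> real n * \<alpha> / real K \<longrightarrow>
                (\<forall>t\<in>{0..real n}. \<bar>poly (pT \<theta>s xs) t - poly (pT \<theta> x) t\<bar> \<le> M)))"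
proof (intro allI impI)
  fix \<alpha> D :: real
  assume \<alpha>D: "0 < \<alpha> \<and> \<alpha> \<le> 1 \<and> 0 < D"
  define M where "M = real (Suc d) * D * (2 * real K * real d / \<alpha>) ^ d"
  have "0 < M" unfolding M_def using assms(1,2) \<alpha>D by simp
  then show "\<exists>M>0. \<forall>n::nat. real n \<ge> 4 * real K * (real d + 1) / \<alpha> \<longrightarrow>
             (\<forall>\<theta> x xs. in_Theta K d s \<Gamma> \<theta> \<and> x \<in> {1..pK \<theta>} \<and> xs \<in> {1..pK \<theta>s} \<and>
                real (card (I_set \<theta>s n D x xs \<theta>)) \<ge> real n * \<alpha> / real K \<longrightarrow>
                (\<forall>t\<in>{0..real n}. \<bar>poly (pT \<theta>s xs) t - poly (pT \<theta> x) t\<bar> \<le> M))"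
    unfolding M_def using abs_trend_difference_le[OF assms(1,2) _ assms(6)] \<alpha>D
    by (intro exI conjI allI impI ballI) auto
qed

end
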